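(* The number $r(\eta,S)$ of visits to the root $\emptyset$ (over all time, by all frogs) in the frog model $(\eta,S)$ is a continuous icv statistic and a continuous pgf statistic.
   Context: Frog model: $G$ is a countable set of vertices with a distinguished root $\emptyset$. A frog model $(\eta,S)$ consists of counts $\eta(v)\in\{0,1,2,\dots\}$ for $v\neq\emptyset$ and paths $S_\cdot(v,i)=(S_j(v,i))_{j\geq0}$ in $G$ with $S_0(v,i)=v$ (including a path for the single frog at the root). Initially one active frog sits at $\emptyset$ and $\eta(v)$ sleeping frogs sit at each $v\neq\emptyset$; the $i$-th frog at $v$, from its activation time on, follows $S_\cdot(v,i)$ in discrete time; when an active frog visits a vertex with sleeping frogs, all of them activate. For a path $P_\cdot$ starting at a nonroot vertex, $\sigma_{P_\cdot}(\eta,S)$ is the model with one extra frog of path $P_\cdot$ added at $P_0$. For a statistic $f$ with values in $[0,\infty]$, $\Delta_{P_\cdot}f(\eta,S)=f(\sigma_{P_\cdot}(\eta,S))-f(\eta,S)$. $f$ is an icv statistic if for all $(\eta,S)$ and all paths $P^1_\cdot,\dots,P^m_\cdot$ starting at a common vertex: (i) for $m=1,2$, $(-1)^m\Delta_{P^1_\cdot}\cdots\Delta_{P^m_\cdot}f(\eta,S)\le0$ whenever all values $f(\sigma_{P^{u_1}_\cdot}\cdots\sigma_{P^{u_j}_\cdot}(\eta,S))$, $\{u_1,\dots,u_j\}\subseteq\{1,\dots,m\}$, are finite; (ii) $f(\eta,S)=\infty$ implies $f(\sigma_{P^1_\cdot}(\eta,S))=\infty$; (iii) $f(\sigma_{P^1_\cdot}\sigma_{P^2_\cdot}(\eta,S))=\infty$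 implies $f(\sigma_{P^i_\cdot}(\eta,S))=\infty$ for $i=1$ or $2$. $f$ is a pgf statistic if (ii),(iii) hold and (i) holds for all $m\ge1$. $f$ is continuous if $\eta_k(v)\nearrow\eta(v)$ for all $v$ implies $f(\eta_k,S)\nearrow f(\eta,S)$. *)

theory Defs
  imports "HOL-Analysis.Analysis"
begin

text \<open>A frog model on a countable vertex type with rt \<open>rt\<close>:
  \<open>eta v\<close> sleeping frogs at each non-rt vertex v (the value \<open>eta rt\<close> is ignored),
  and \<open>S v i\<close> is the path (a function from time to vertices) of the i-th frog at v
  (frogs at v are indexed 0..eta v - 1); \<open>S rt 0\<close> is the path of the initially active
  frog at the rt.  Only the entries with i < eta v (and (rt,0)) are relevant.\<close>

type_synonym 'v paths = "'v \<Rightarrow> nat \<Rightarrow> nat \<Rightarrow> 'v"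
type_synonym 'v frog_model = "('v \<Rightarrow> nat) \<times> 'v paths"

definition valid_model :: "'v frog_model \<Rightarrow> bool" where
  "valid_model x \<longleftrightarrow> (\<forall>v i. snd x v i 0 = v)"

definition add_frog :: "(nat \<Rightarrow> 'v) \<Rightarrow> 'v frog_model \<Rightarrow> 'v frog_model" where
  "add_frog P x = (case x of (eta, S) \<Rightarrow>
     (eta(P 0 := Suc (eta (P 0))), S(P 0 := (S (P 0))(eta (P 0) := P))))"

text \<open>\<open>reached rt eta S w t\<close>: vertex w is occupied at time t by some frog, when the frogs
  at a vertex v are (re)started at any time at which v is occupied.  The least such t is
  exactly the activation time of w in the frog model (restarts only produce later visits).\<close>
inductive reached :: "'v \<Rightarrow> ('v \<Rightarrow> nat) \<Rightarrow> 'v paths \<Rightarrow> 'v \<Rightarrow> nat \<Rightarrow> bool"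
  for rt eta S where
  root_frog: "reached rt eta S (S rt 0 j) j"
| woken: "reached rt eta S v t \<Longrightarrow> v \<noteq> rt \<Longrightarrow> i < eta v \<Longrightarrow>
          reached rt eta S (S v i j) (t + j)"

definition activated :: "'v \<Rightarrow> ('v \<Rightarrow> nat) \<Rightarrow> 'v paths \<Rightarrow> 'v \<Rightarrow> bool" where
  "activated rt eta S v \<longleftrightarrow> (\<exists>t. reached rt eta S v t)"

definition active_frogs :: "'v \<Rightarrow> ('v \<Rightarrow> nat) \<Rightarrow> 'v paths \<Rightarrow> ('v \<times> nat) set" where
  "active_frogs rt eta S =
     insert (rt, 0) {(v, i). v \<noteq> rt \<and> activated rt eta S v \<and> i < eta v}"

definition visit_count :: "'v \<Rightarrow> (nat \<Rightarrow> 'v) \<Rightarrow> ennreal" where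
  "visit_count rt p =
     (if finite {j. p j = rt} then of_nat (card {j. p j = rt}) else \<infinity>)"

text \<open>r(eta,S): total number of visits to the rt by all frogs over all time.
  An activated frog at v follows S v i from its activation time on, so it visits the rt
  exactly as often as its path does.\<close>
definition root_visits :: "'v \<Rightarrow> 'v frog_model \<Rightarrow> ennreal" where
  "root_visits rt x = (case x of (eta, S) \<Rightarrow>
     (\<Sum>\<^sub>\<infinity>(v, i)\<in>active_frogs rt eta S. visit_count rt (S v i)))"

primrec iter_delta :: "(nat \<Rightarrow> 'v) list \<Rightarrow> ('v frog_model \<Rightarrow> real) \<Rightarrow> 'v frog_model \<Rightarrow> real" where
  "iter_delta [] g x = g x"
| "iter_delta (P # Ps) g x = iter_delta Ps g (add_frog P x) - iter_delta Ps g x"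

primrec all_finite :: "(nat \<Rightarrow> 'v) list \<Rightarrow> ('v frog_model \<Rightarrow> ennreal) \<Rightarrow> 'v frog_model \<Rightarrow> bool" where
  "all_finite [] f x = (f x \<noteq> \<infinity>)"
| "all_finite (P # Ps) f x = (all_finite Ps f (add_frog P x) \<and> all_finite Ps f x)"

definition common_start :: "'v \<Rightarrow> (nat \<Rightarrow> 'v) list \<Rightarrow> bool" where
  "common_start rt Ps \<longleftrightarrow> (\<exists>v. v \<noteq> rt \<and> (\<forall>P\<in>set Ps. P 0 = v))"

definition sign_cond :: "'v \<Rightarrow> ('v frog_model \<Rightarrow> ennreal) \<Rightarrow> nat \<Rightarrow> bool" where
  "sign_cond rt f m \<longleftrightarrow> (\<forall>x Ps. valid_model x \<longrightarrow> length Ps = m \<longrightarrow> common_start rt Ps \<longrightarrow>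
      all_finite Ps f x \<longrightarrow> (-1) ^ m * iter_delta Ps (\<lambda>y. enn2real (f y)) x \<le> 0)"

definition inf_cond_ii :: "'v \<Rightarrow> ('v frog_model \<Rightarrow> ennreal) \<Rightarrow> bool" where
  "inf_cond_ii rt f \<longleftrightarrow> (\<forall>x P. valid_model x \<longrightarrow> P 0 \<noteq> rt \<longrightarrow>
      f x = \<infinity> \<longrightarrow> f (add_frog P x) = \<infinity>)"

definition inf_cond_iii :: "'v \<Rightarrow> ('v frog_model \<Rightarrow> ennreal) \<Rightarrow> bool" where
  "inf_cond_iii rt f \<longleftrightarrow> (\<forall>x P1 P2. valid_model x \<longrightarrow> P1 0 \<noteq> rt \<longrightarrow> P2 0 = P1 0 \<longrightarrow>
      f (add_frog P1 (add_frog P2 x)) = \<infinity> \<longrightarrow>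
      f (add_frog P1 x) = \<infinity> \<or> f (add_frog P2 x) = \<infinity>)"

definition icv_statistic :: "'v \<Rightarrow> ('v frog_model \<Rightarrow> ennreal) \<Rightarrow> bool" where
  "icv_statistic rt f \<longleftrightarrow> sign_cond rt f 1 \<and> sign_cond rt f 2 \<and>
     inf_cond_ii rt f \<and> inf_cond_iii rt f"

definition pgf_statistic :: "'v \<Rightarrow> ('v frog_model \<Rightarrow> ennreal) \<Rightarrow> bool" where
  "pgf_statistic rt f \<longleftrightarrow> (\<forall>m\<ge>1. sign_cond rt f m) \<and>
     inf_cond_ii rt f \<and> inf_cond_iii rt f"

definition continuous_statistic :: "('v frog_model \<Rightarrow> ennreal) \<Rightarrow> bool" where
  "continuous_statistic f \<longleftrightarrow> (\<forall>eta S etas. valid_model (eta, S) \<longrightarrow>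
     (\<forall>v. incseq (\<lambda>k. etas k v) \<and> (\<lambda>k. etas k v) \<longlonglongrightarrow> eta v) \<longrightarrow>
     incseq (\<lambda>k. f (etas k, S)) \<and> (\<lambda>k. f (etas k, S)) \<longlonglongrightarrow> f (eta, S))"

end

theory Submission
  imports Defs
begin

text \<open>Add frogs \<open>R\<close> at a common vertex \<open>v\<close>. If \<open>v\<close> is never activated, they never wake up
  and \<open>r\<close> is unchanged. Otherwise activation is determined frog by frog: a vertex is activated
  with \<open>R\<close> added iff it is activated originally or with a single \<open>Q \<in> set R\<close> added. So \<open>r\<close>
  after adding \<open>R\<close> is a constant, plus the visit mass of the union of the old active frogs and
  the frogs woken by each single \<open>Q\<close> (a coverage function of \<open>R\<close>), plus the visits of the added
  frogs themselves (an additive function of \<open>R\<close>). Iterated differences of a coverage function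
  alternate in sign and those of an additive one vanish from order two on, which gives every
  sign condition; monotonicity and subadditivity of the same representation give the conditions
  on infinite values. Continuity is monotone convergence: every finite set of active frogs is
  already active for all large \<open>k\<close> when \<open>eta\<^sub>k \<nearrow> eta\<close>.\<close>

text \<open>The library fact \<open>summable_on_ennreal\<close> only covers functions of the form
  \<open>ennreal_of_enat \<circ> f\<close>.\<close>
lemma ennreal_summable_on [simp]: "(f :: 'a \<Rightarrow> ennreal) summable_on A"
  by (rule nonneg_summable_on_complete) simp

lemma infsum_ennreal_mono_set:
  fixes f :: "'a \<Rightarrow> ennreal"
  assumes "A \<subseteq> B"
  shows "infsum f A \<le> infsum f B"
  using assms by (intro infsum_mono_neutral) auto

lemma infsum_ennreal_finite_subset:
  fixes f :: "'a \<Rightarrow> ennreal"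
  assumes "infsum f B \<noteq> \<infinity>" "A \<subseteq> B"
  shows "infsum f A \<noteq> \<infinity>"
  using infsum_ennreal_mono_set[OF assms(2), of f] assms(1) by (auto simp: top_unique)

lemma infsum_ennreal_Un_le:
  fixes f :: "'a \<Rightarrow> ennreal"
  shows "infsum f (A \<union> B) \<le> infsum f A + infsum f B"
proof -
  have "infsum f (A \<union> B) = infsum f A + infsum f (B - A)"
    using infsum_Un_disjoint[of f A "B - A"] by simp
  also have "\<dots> \<le> infsum f A + infsum f B"
    by (intro add_left_mono infsum_ennreal_mono_set) auto
  finally show ?thesis .
qed

lemma sum_list_ennreal_eq_top_iff:
  fixes xs :: "ennreal list"
  shows "sum_list xs = top \<longleftrightarrow> (\<exists>x\<in>set xs. x = top)"
  by (induction xs) auto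

lemma enn2real_sum_list:
  fixes xs :: "ennreal list"
  assumes "\<And>x. x \<in> set xs \<Longrightarrow> x \<noteq> \<infinity>"
  shows "enn2real (sum_list xs) = sum_list (map enn2real xs)"
  using assms
proof (induction xs)
  case (Cons x xs)
  then have "x \<noteq> \<infinity>" "sum_list xs \<noteq> \<infinity>"
    by (auto simp: sum_list_ennreal_eq_top_iff)
  with Cons show ?case by (simp add: enn2real_plus top.not_eq_extremum)
qed simp

primrec iter_diff :: "'p list \<Rightarrow> ('p list \<Rightarrow> real) \<Rightarrow> real" where
  "iter_diff [] \<phi> = \<phi> []"
| "iter_diff (P # Ps) \<phi> = iter_diff Ps (\<lambda>R. \<phi> (R @ [P])) - iter_diff Ps \<phi>"

lemma iter_diff_add: "iter_diff Ps (\<lambda>R. \<phi> R + \<psi> R) = iter_diff Ps \<phi> + iter_diff Ps \<psi>"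
  by (induction Ps arbitrary: \<phi> \<psi>) auto

lemma iter_diff_diff: "iter_diff Ps (\<lambda>R. \<phi> R - \<psi> R) = iter_diff Ps \<phi> - iter_diff Ps \<psi>"
  by (induction Ps arbitrary: \<phi> \<psi>) auto

lemma iter_diff_const: "Ps \<noteq> [] \<Longrightarrow> iter_diff Ps (\<lambda>R. c) = 0"
  by (cases Ps) auto

lemma iter_diff_cong:
  assumes "\<And>R. set R \<subseteq> set Ps \<Longrightarrow> \<phi> R = \<psi> R"
  shows "iter_diff Ps \<phi> = iter_diff Ps \<psi>"
  using assms
proof (induction Ps arbitrary: \<phi> \<psi>)
  case (Cons P Ps)
  have "iter_diff Ps (\<lambda>R. \<phi> (R @ [P])) = iter_diff Ps (\<lambda>R. \<psi> (R @ [P]))"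
    by (rule Cons.IH, rule Cons.prems) auto
  moreover have "iter_diff Ps \<phi> = iter_diff Ps \<psi>"
    by (rule Cons.IH, rule Cons.prems) auto
  ultimately show ?case by simp
qed simp

lemma iter_diff_sum_list_Cons:
  "iter_diff (P # Ps) (\<lambda>R. sum_list (map c R)) = (if Ps = [] then c P else 0)"
  by (cases Ps) (simp_all add: iter_diff_add iter_diff_const)

lemma iter_diff_sum_list_alternating:
  assumes "\<And>P. c P \<ge> (0::real)" "Ps \<noteq> []"
  shows "(-1) ^ length Ps * iter_diff Ps (\<lambda>R. sum_list (map c R)) \<le> 0"
proof -
  obtain P Qs where "Ps = P # Qs"
    using assms(2) by (cases Ps) auto
  then show ?thesis
    unfolding \<open>Ps = P # Qs\<close> iter_diff_sum_list_Cons using assms(1) by simp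
qed

lemma iter_diff_coverage_alternating:
  fixes \<omega> :: "'a \<Rightarrow> ennreal" and B :: "'p \<Rightarrow> 'a set"
  assumes "infsum \<omega> E \<noteq> \<infinity>" "Ps \<noteq> []"
  shows "(-1) ^ length Ps * iter_diff Ps (\<lambda>R. enn2real (infsum \<omega> ((A \<union> \<Union>(B ` set R)) \<inter> E))) \<le> 0"
  using assms
proof (induction Ps arbitrary: E)
  case (Cons P Ps)
  define U where "U R = A \<union> \<Union>(B ` set R)" for R
  define E' where "E' = (B P - A) \<inter> E"
  have fin: "infsum \<omega> X \<noteq> \<infinity>" if "X \<subseteq> E" for X
    using infsum_ennreal_finite_subset[OF Cons.prems(1) that] .
  \<comment> \<open>Adding \<open>P\<close> gains the part of \<open>E'\<close> not yet covered, so the differences in direction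
     \<open>P\<close> form, up to sign, a coverage function of the same kind over the smaller set \<open>E'\<close>.\<close>
  have gain: "enn2real (infsum \<omega> (U (R @ [P]) \<inter> E)) = enn2real (infsum \<omega> (U R \<inter> E))
      + enn2real (infsum \<omega> E') - enn2real (infsum \<omega> (U R \<inter> E'))" for R
  proof -
    have split_new: "U (R @ [P]) \<inter> E = (U R \<inter> E) \<union> (E' - U R)"
      and split_E': "E' = (U R \<inter> E') \<union> (E' - U R)"
      unfolding U_def E'_def by auto
    have "infsum \<omega> (U (R @ [P]) \<inter> E) = infsum \<omega> (U R \<inter> E) + infsum \<omega> (E' - U R)"
      unfolding split_new by (rule infsum_Un_disjoint) auto
    moreover have "infsum \<omega> E' = infsum \<omega> (U R \<inter> E') + infsum \<omega> (E' - U R)"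
      by (subst split_E', rule infsum_Un_disjoint) auto
    moreover have "infsum \<omega> (U R \<inter> E) \<noteq> \<infinity>" "infsum \<omega> (E' - U R) \<noteq> \<infinity>"
      "infsum \<omega> (U R \<inter> E') \<noteq> \<infinity>"
      by (intro fin; auto simp: E'_def)+
    ultimately show ?thesis by (simp add: enn2real_plus top.not_eq_extremum)
  qed
  show ?case
  proof (cases "Ps = []")
    case True
    have "infsum \<omega> (U [] \<inter> E) \<le> infsum \<omega> (U [P] \<inter> E)"
      by (rule infsum_ennreal_mono_set) (auto simp: U_def)
    moreover have "infsum \<omega> (U [P] \<inter> E) \<noteq> \<infinity>" by (rule fin) auto
    ultimately show ?thesis
      using True by (simp add: U_def enn2real_mono top.not_eq_extremum)
  next
    case False
    have "iter_diff (P # Ps) (\<lambda>R. enn2real (infsum \<omega> (U R \<inter> E)))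
       = - iter_diff Ps (\<lambda>R. enn2real (infsum \<omega> (U R \<inter> E')))"
      by (simp add: gain iter_diff_add iter_diff_diff iter_diff_const[OF False])
    moreover have "(-1) ^ length Ps * iter_diff Ps (\<lambda>R. enn2real (infsum \<omega> (U R \<inter> E'))) \<le> 0"
      unfolding U_def by (rule Cons.IH[OF fin False]) (auto simp: E'_def)
    ultimately show ?thesis by (simp add: U_def)
  qed
qed simp

lemma iter_diff_alternating_coverage_additive:
  fixes \<omega> :: "'a \<Rightarrow> ennreal" and B :: "'p \<Rightarrow> 'a set" and c :: "'p \<Rightarrow> ennreal"
  assumes "Ps \<noteq> []"
    and \<phi>: "\<And>R. set R \<subseteq> set Ps \<Longrightarrow>
      \<phi> R = enn2real (b + infsum \<omega> (A \<union> \<Union>(B ` set R)) + sum_list (map c R))"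
    and fin: "b + infsum \<omega> (A \<union> \<Union>(B ` set Ps)) + sum_list (map c Ps) \<noteq> \<infinity>"
  shows "(-1) ^ length Ps * iter_diff Ps \<phi> \<le> 0"
proof -
  define E where "E = A \<union> \<Union>(B ` set Ps)"
  have finE: "infsum \<omega> E \<noteq> \<infinity>" and fin_b: "b \<noteq> \<infinity>" and finc: "\<And>Q. Q \<in> set Ps \<Longrightarrow> c Q \<noteq> \<infinity>"
    using fin by (auto simp: E_def sum_list_ennreal_eq_top_iff image_iff)
  have \<phi>_real: "\<phi> R = enn2real b + enn2real (infsum \<omega> ((A \<union> \<Union>(B ` set R)) \<inter> E))
      + sum_list (map (\<lambda>Q. enn2real (c Q)) R)" if R: "set R \<subseteq> set Ps" for R
  proof -
    have covered: "(A \<union> \<Union>(B ` set R)) \<inter> E = A \<union> \<Union>(B ` set R)"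
      using R by (auto simp: E_def)
    have "infsum \<omega> (A \<union> \<Union>(B ` set R)) \<noteq> \<infinity>"
      by (rule infsum_ennreal_finite_subset[OF finE]) (use R in \<open>auto simp: E_def\<close>)
    moreover have cR: "\<And>Q. Q \<in> set R \<Longrightarrow> c Q \<noteq> \<infinity>"
      using finc R by blast
    then have "sum_list (map c R) \<noteq> \<infinity>"
      by (force simp: sum_list_ennreal_eq_top_iff)
    moreover have "enn2real (sum_list (map c R)) = sum_list (map (\<lambda>Q. enn2real (c Q)) R)"
      using cR by (subst enn2real_sum_list) (auto simp: o_def)
    ultimately show ?thesis
      using fin_b by (simp add: \<phi>[OF R] covered enn2real_plus top.not_eq_extremum)
  qed
  have "iter_diff Ps \<phi> = iter_diff Ps (\<lambda>R. enn2real b + enn2real (infsum \<omega> ((A \<union> \<Union>(B ` set R)) \<inter> E))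
      + sum_list (map (\<lambda>Q. enn2real (c Q)) R))"
    by (rule iter_diff_cong) (rule \<phi>_real)
  also have "\<dots> = iter_diff Ps (\<lambda>R. enn2real (infsum \<omega> ((A \<union> \<Union>(B ` set R)) \<inter> E)))
      + iter_diff Ps (\<lambda>R. sum_list (map (\<lambda>Q. enn2real (c Q)) R))"
    by (simp add: iter_diff_add iter_diff_const[OF assms(1)])
  finally show ?thesis
    using iter_diff_coverage_alternating[OF finE assms(1), of A B]
      iter_diff_sum_list_alternating[OF _ assms(1), of "\<lambda>Q. enn2real (c Q)"]
    by (simp add: distrib_left)
qed

definition add_frogs :: "(nat \<Rightarrow> 'v) list \<Rightarrow> 'v frog_model \<Rightarrow> 'v frog_model" where
  "add_frogs Ps x = foldr add_frog Ps x"

lemma add_frogs_simps [simp]: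
  "add_frogs [] x = x"
  "add_frogs (P # Ps) x = add_frog P (add_frogs Ps x)"
  "add_frogs (Ps @ [P]) x = add_frogs Ps (add_frog P x)"
  by (simp_all add: add_frogs_def)

lemma iter_delta_eq_iter_diff: "iter_delta Ps g x = iter_diff Ps (\<lambda>R. g (add_frogs R x))"
  by (induction Ps arbitrary: x) auto

lemma all_finite_add_frogs: "all_finite Ps f x \<Longrightarrow> f (add_frogs (rev Ps) x) \<noteq> \<infinity>"
  by (induction Ps arbitrary: x) auto

text \<open>The frog added last is the head of \<open>R\<close>, hence the \<open>rev\<close>.\<close>
definition extend_paths :: "'v \<Rightarrow> ('v \<Rightarrow> nat) \<Rightarrow> 'v paths \<Rightarrow> (nat \<Rightarrow> 'v) list \<Rightarrow> 'v paths" where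
  "extend_paths v eta S R = (\<lambda>w i.
     if w = v \<and> eta v \<le> i \<and> i < eta v + length R then rev R ! (i - eta v) else S w i)"

lemma add_frogs_common_start:
  assumes "\<forall>Q\<in>set R. Q 0 = v"
  shows "add_frogs R (eta, S) = (eta(v := eta v + length R), extend_paths v eta S R)"
  using assms
proof (induction R)
  case Nil
  then show ?case by (auto simp: extend_paths_def fun_eq_iff)
next
  case (Cons Q R)
  then show ?case
    by (auto simp: add_frog_def extend_paths_def fun_eq_iff nth_append)
qed

lemma reached_mono_frogs:
  assumes "reached rt eta S w t" "S' rt 0 = S rt 0"
    and "\<And>w i. w \<noteq> rt \<Longrightarrow> i < eta w \<Longrightarrow> \<exists>i'<eta' w. S' w i' = S w i"
  shows "reached rt eta' S' w t"
  using assms(1)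
proof (induction rule: reached.induct)
  case (root_frog j)
  then show ?case using reached.root_frog[of rt eta' S' j] assms(2) by simp
next
  case (woken v t i j)
  then obtain i' where "i' < eta' v" "S' v i' = S v i" using assms(3) by blast
  then show ?case using reached.woken[OF woken.IH woken.hyps(2), of i' j] by simp
qed

lemma reached_extend_paths:
  assumes "reached rt eta S w t" "v \<noteq> rt"
  shows "reached rt (eta(v := eta v + length R)) (extend_paths v eta S R) w t"
  using assms(1)
proof (rule reached_mono_frogs)
  fix w i assume "i < eta w"
  then show "\<exists>i'<(eta(v := eta v + length R)) w. extend_paths v eta S R w i' = S w i"
    by (intro exI[of _ i]) (auto simp: extend_paths_def)
qed (use assms(2) in \<open>simp add: extend_paths_def\<close>)

lemma activated_woken:
  assumes "activated rt eta S w" "w \<noteq> rt" "i < eta w"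
  shows "activated rt eta S (S w i j)"
proof -
  obtain t where "reached rt eta S w t"
    using assms(1) unfolding activated_def by blast
  from reached.woken[OF this assms(2,3)] show ?thesis
    unfolding activated_def by blast
qed

lemma activated_extend_paths:
  assumes "activated rt eta S w" "v \<noteq> rt"
  shows "activated rt (eta(v := eta v + length R)) (extend_paths v eta S R) w"
proof -
  obtain t where "reached rt eta S w t"
    using assms(1) unfolding activated_def by blast
  from reached_extend_paths[OF this assms(2)] show ?thesis
    unfolding activated_def by blast
qed

definition activated_by :: "'v \<Rightarrow> 'v \<Rightarrow> ('v \<Rightarrow> nat) \<Rightarrow> 'v paths \<Rightarrow> (nat \<Rightarrow> 'v) \<Rightarrow> 'v \<Rightarrow> bool" where
  "activated_by rt v eta S Q = activated rt (eta(v := eta v + 1)) (extend_paths v eta S [Q])"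

lemma activated_by_new_frog:
  assumes "activated rt eta S v" "v \<noteq> rt"
  shows "activated_by rt v eta S Q (Q j)"
proof -
  have "activated rt (eta(v := eta v + length [Q])) (extend_paths v eta S [Q]) v"
    by (rule activated_extend_paths[OF assms])
  from activated_woken[OF this assms(2), of "eta v" j] show ?thesis
    by (simp add: activated_by_def extend_paths_def)
qed

lemma activated_extend_paths_inactive:
  assumes "\<not> activated rt eta S v" "v \<noteq> rt"
  shows "activated rt (eta(v := eta v + length R)) (extend_paths v eta S R) w \<longleftrightarrow> activated rt eta S w"
proof
  assume "activated rt (eta(v := eta v + length R)) (extend_paths v eta S R) w"
  then obtain t where "reached rt (eta(v := eta v + length R)) (extend_paths v eta S R) w t"
    unfolding activated_def by blast
  then have "reached rt eta S w t"
  proof (induction rule: reached.induct)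
    case (root_frog j)
    then show ?case using reached.root_frog[of rt eta S j] assms(2) by (simp add: extend_paths_def)
  next
    case (woken w' t i j)
    have "w' \<noteq> v" using woken.IH assms(1) unfolding activated_def by blast
    then show ?case using reached.woken[OF woken.IH woken.hyps(2), of i j] woken.hyps(3)
      by (simp add: extend_paths_def)
  qed
  then show "activated rt eta S w" unfolding activated_def by blast
next
  assume "activated rt eta S w"
  then show "activated rt (eta(v := eta v + length R)) (extend_paths v eta S R) w"
    by (rule activated_extend_paths[OF _ assms(2)])
qed

lemma reached_extend_paths_cases:
  assumes "reached rt (eta(v := eta v + length R)) (extend_paths v eta S R) w t"
    and v: "activated rt eta S v" "v \<noteq> rt"
  shows "activated rt eta S w \<or> (\<exists>Q\<in>set R. activated_by rt v eta S Q w)"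
  using assms(1)
proof (induction rule: reached.induct)
  case (root_frog j)
  then show ?case
    using reached.root_frog[of rt eta S j] v(2) by (auto simp: extend_paths_def activated_def)
next
  case (woken w' t i j)
  show ?case
  proof (cases "w' = v \<and> eta v \<le> i")
    case True
    then have "i - eta v < length R" using woken.hyps(3) by auto
    then have "rev R ! (i - eta v) \<in> set R" by (metis length_rev nth_mem set_rev)
    moreover have "extend_paths v eta S R w' i = rev R ! (i - eta v)"
      using True woken.hyps(3) by (auto simp: extend_paths_def)
    ultimately show ?thesis using activated_by_new_frog[OF v] by auto
  next
    case False
    then have i: "i < eta w'" and old: "extend_paths v eta S R w' i = S w' i"
      using woken.hyps(3) by (auto simp: extend_paths_def split: if_splits)
    have "activated_by rt v eta S Q (S w' i j)" if "activated_by rt v eta S Q w'" for Q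
    proof -
      have "activated rt (eta(v := eta v + 1)) (extend_paths v eta S [Q])
          (extend_paths v eta S [Q] w' i j)"
        using that i woken.hyps(2) by (intro activated_woken) (auto simp: activated_by_def)
      moreover have "extend_paths v eta S [Q] w' i = S w' i"
        using i by (auto simp: extend_paths_def)
      ultimately show ?thesis by (simp add: activated_by_def)
    qed
    then show ?thesis using woken.IH activated_woken[of rt eta S w' i j] woken.hyps(2) i old by auto
  qed
qed

lemma activated_by_imp_activated_extend_paths:
  assumes "activated_by rt v eta S Q w" "Q \<in> set R" "v \<noteq> rt"
  shows "activated rt (eta(v := eta v + length R)) (extend_paths v eta S R) w"
proof -
  obtain t where t: "reached rt (eta(v := eta v + 1)) (extend_paths v eta S [Q]) w t"
    using assms(1) unfolding activated_by_def activated_def by blast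
  obtain k where k: "k < length R" "rev R ! k = Q"
    using assms(2) by (metis in_set_conv_nth length_rev set_rev)
  have "reached rt (eta(v := eta v + length R)) (extend_paths v eta S R) w t"
    using t
  proof (rule reached_mono_frogs)
    fix w' i assume "i < (eta(v := eta v + 1)) w'"
    then show "\<exists>i'<(eta(v := eta v + length R)) w'.
        extend_paths v eta S R w' i' = extend_paths v eta S [Q] w' i"
    proof (cases "w' = v \<and> i = eta v")
      case True
      then show ?thesis using k by (intro exI[of _ "eta v + k"]) (auto simp: extend_paths_def)
    next
      case False
      with \<open>i < (eta(v := eta v + 1)) w'\<close> show ?thesis
        by (intro exI[of _ i]) (auto simp: extend_paths_def split: if_splits)
    qed
  qed (use assms(3) in \<open>simp add: extend_paths_def\<close>)
  then show ?thesis unfolding activated_def by blast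
qed

lemma activated_extend_paths_iff:
  assumes "activated rt eta S v" "v \<noteq> rt"
  shows "activated rt (eta(v := eta v + length R)) (extend_paths v eta S R) w \<longleftrightarrow>
    activated rt eta S w \<or> (\<exists>Q\<in>set R. activated_by rt v eta S Q w)"
proof
  assume "activated rt (eta(v := eta v + length R)) (extend_paths v eta S R) w"
  then obtain t where "reached rt (eta(v := eta v + length R)) (extend_paths v eta S R) w t"
    unfolding activated_def by blast
  then show "activated rt eta S w \<or> (\<exists>Q\<in>set R. activated_by rt v eta S Q w)"
    by (rule reached_extend_paths_cases[OF _ assms])
next
  assume "activated rt eta S w \<or> (\<exists>Q\<in>set R. activated_by rt v eta S Q w)"
  then show "activated rt (eta(v := eta v + length R)) (extend_paths v eta S R) w"
    using activated_extend_paths[OF _ assms(2)] activated_by_imp_activated_extend_paths[OF _ _ assms(2)]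
    by blast
qed

definition frogs_at :: "'v \<Rightarrow> ('v \<Rightarrow> nat) \<Rightarrow> ('v \<Rightarrow> bool) \<Rightarrow> ('v \<times> nat) set" where
  "frogs_at rt eta X = {(w, i). w \<noteq> rt \<and> X w \<and> i < eta w}"

lemma active_frogs_extend_paths:
  assumes "activated rt eta S v" "v \<noteq> rt"
  shows "active_frogs rt (eta(v := eta v + length R)) (extend_paths v eta S R) =
    insert (rt, 0) ((frogs_at rt eta (activated rt eta S)
      \<union> \<Union>((\<lambda>Q. frogs_at rt eta (activated_by rt v eta S Q)) ` set R))
      \<union> (\<lambda>k. (v, eta v + k)) ` {..<length R})"
proof -
  have "w \<noteq> rt \<and> activated rt (eta(v := eta v + length R)) (extend_paths v eta S R) w
        \<and> i < (eta(v := eta v + length R)) w \<longleftrightarrow>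
      (w, i) \<in> (frogs_at rt eta (activated rt eta S)
        \<union> \<Union>((\<lambda>Q. frogs_at rt eta (activated_by rt v eta S Q)) ` set R))
        \<union> (\<lambda>k. (v, eta v + k)) ` {..<length R}" for w i
  proof (cases "w = v \<and> eta v \<le> i")
    case True
    then have "(w, i) = (v, eta v + (i - eta v))" by auto
    then show ?thesis
      using True assms by (auto simp: activated_extend_paths_iff frogs_at_def image_iff
          intro!: bexI[of _ "i - eta v"])
  next
    case False
    then show ?thesis
      using assms by (auto simp: activated_extend_paths_iff frogs_at_def)
  qed
  then show ?thesis
    unfolding active_frogs_def by auto
qed

lemma root_visits_add_frogs_inactive:
  assumes "\<forall>Q\<in>set R. Q 0 = v" "v \<noteq> rt" "\<not> activated rt eta S v"
  shows "root_visits rt (add_frogs R (eta, S)) = root_visits rt (eta, S)"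
proof -
  have "active_frogs rt (eta(v := eta v + length R)) (extend_paths v eta S R) = active_frogs rt eta S"
    using activated_extend_paths_inactive[OF assms(3,2)] assms(2,3)
    by (auto simp: active_frogs_def split: if_splits)
  moreover have "visit_count rt (extend_paths v eta S R w i) = visit_count rt (S w i)"
    if "(w, i) \<in> active_frogs rt eta S" for w i
    using that assms(2,3) by (auto simp: active_frogs_def extend_paths_def)
  ultimately show ?thesis
    unfolding add_frogs_common_start[OF assms(1)] root_visits_def
    by (auto intro: infsum_cong)
qed

lemma root_visits_add_frogs_active:
  assumes "\<forall>Q\<in>set R. Q 0 = v" "v \<noteq> rt" "activated rt eta S v"
  shows "root_visits rt (add_frogs R (eta, S)) = visit_count rt (S rt 0)
    + infsum (\<lambda>(w, i). visit_count rt (S w i))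
        (frogs_at rt eta (activated rt eta S)
          \<union> \<Union>((\<lambda>Q. frogs_at rt eta (activated_by rt v eta S Q)) ` set R))
    + sum_list (map (visit_count rt) R)"
proof -
  define G where "G = frogs_at rt eta (activated rt eta S)
    \<union> \<Union>((\<lambda>Q. frogs_at rt eta (activated_by rt v eta S Q)) ` set R)"
  define N where "N = (\<lambda>k. (v, eta v + k)) ` {..<length R}"
  define f where "f = (\<lambda>(w, i). visit_count rt (extend_paths v eta S R w i))"
  have "(rt, 0) \<notin> G \<union> N" "G \<inter> N = {}"
    using assms(2) by (auto simp: G_def N_def frogs_at_def)
  then have "root_visits rt (add_frogs R (eta, S)) = f (rt, 0) + infsum f G + infsum f N"
    by (simp add: add_frogs_common_start[OF assms(1)] root_visits_def
        active_frogs_extend_paths[OF assms(3,2)] infsum_insert infsum_Un_disjoint add.assoc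
        flip: f_def G_def N_def)
  also have "f (rt, 0) = visit_count rt (S rt 0)"
    using assms(2) by (simp add: f_def extend_paths_def)
  also have "infsum f G = infsum (\<lambda>(w, i). visit_count rt (S w i)) G"
    by (rule infsum_cong) (auto simp: f_def G_def frogs_at_def extend_paths_def)
  also have "infsum f N = (\<Sum>k<length R. f (v, eta v + k))"
    by (simp add: N_def sum.reindex inj_on_def)
  also have "\<dots> = sum_list (map (visit_count rt) (rev R))"
    by (simp add: f_def extend_paths_def sum_list_sum_nth atLeast0LessThan)
  also have "\<dots> = sum_list (map (visit_count rt) R)"
    by (simp add: rev_map[symmetric] sum_list_rev)
  finally show ?thesis by (simp add: G_def)
qed

lemma root_visits_mono:
  assumes "\<And>w. eta w \<le> eta' w" "S' rt 0 = S rt 0" "\<And>w i. i < eta w \<Longrightarrow> S' w i = S w i"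
  shows "root_visits rt (eta, S) \<le> root_visits rt (eta', S')"
proof -
  have "activated rt eta' S' w" if act: "activated rt eta S w" for w
  proof -
    obtain t where "reached rt eta S w t"
      using act unfolding activated_def by blast
    then have "reached rt eta' S' w t"
    proof (rule reached_mono_frogs)
      fix w i assume "i < eta w"
      then show "\<exists>i'<eta' w. S' w i' = S w i"
        using assms(1,3) by (intro exI[of _ i]) (auto intro: less_le_trans)
    qed (rule assms(2))
    then show ?thesis unfolding activated_def by blast
  qed
  then have sub: "active_frogs rt eta S \<subseteq> active_frogs rt eta' S'"
    using assms(1) by (auto simp: active_frogs_def intro: less_le_trans)
  have "root_visits rt (eta, S) = (\<Sum>\<^sub>\<infinity>(w, i)\<in>active_frogs rt eta S. visit_count rt (S' w i))"
    unfolding root_visits_def prod.case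
    by (rule infsum_cong) (auto simp: active_frogs_def assms(2,3))
  also have "\<dots> \<le> root_visits rt (eta', S')"
    unfolding root_visits_def prod.case using sub by (rule infsum_ennreal_mono_set)
  finally show ?thesis .
qed

lemma root_visits_sign_cond:
  fixes rt :: 'v
  assumes "m \<ge> 1"
  shows "sign_cond rt (root_visits rt) m"
  unfolding sign_cond_def
proof (intro allI impI)
  fix x :: "'v frog_model" and Ps
  assume len: "length Ps = m" and start: "common_start rt Ps"
    and fin: "all_finite Ps (root_visits rt) x"
  obtain v where v: "v \<noteq> rt" "\<forall>P\<in>set Ps. P 0 = v"
    using start unfolding common_start_def by blast
  obtain eta S where x: "x = (eta, S)" by fastforce
  have "Ps \<noteq> []" using len assms by auto
  have v_R: "\<forall>Q\<in>set R. Q 0 = v" if "set R \<subseteq> set Ps" for R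
    using v(2) that by auto
  define g where "g = (\<lambda>R. enn2real (root_visits rt (add_frogs R x)))"
  have "(-1) ^ length Ps * iter_diff Ps g \<le> 0"
  proof (cases "activated rt eta S v")
    case False
    have "iter_diff Ps g = iter_diff Ps (\<lambda>R. g [])"
      by (rule iter_diff_cong) (simp add: g_def x root_visits_add_frogs_inactive[OF v_R v(1) False])
    then show ?thesis by (simp add: iter_diff_const[OF \<open>Ps \<noteq> []\<close>])
  next
    case True
    define \<omega> where "\<omega> = (\<lambda>(w, i). visit_count rt (S w i))"
    define B where "B Q = frogs_at rt eta (activated_by rt v eta S Q)" for Q
    note active = root_visits_add_frogs_active[OF v_R v(1) True, folded \<omega>_def B_def]
    show ?thesis
    proof (rule iter_diff_alternating_coverage_additive[where \<omega> = \<omega> and B = B and c = "visit_count rt"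
          and A = "frogs_at rt eta (activated rt eta S)" and b = "visit_count rt (S rt 0)"])
      show "g R = enn2real (visit_count rt (S rt 0) + infsum \<omega> (frogs_at rt eta (activated rt eta S)
          \<union> \<Union>(B ` set R)) + sum_list (map (visit_count rt) R))" if "set R \<subseteq> set Ps" for R
        using active[OF that] by (simp add: g_def x)
      show "visit_count rt (S rt 0) + infsum \<omega> (frogs_at rt eta (activated rt eta S)
          \<union> \<Union>(B ` set Ps)) + sum_list (map (visit_count rt) Ps) \<noteq> \<infinity>"
        using all_finite_add_frogs[OF fin] active[of "rev Ps"]
        by (simp add: x rev_map[symmetric] sum_list_rev)
    qed fact
  qed
  then show "(-1) ^ m * iter_delta Ps (\<lambda>y. enn2real (root_visits rt y)) x \<le> 0"
    by (simp add: len iter_delta_eq_iter_diff g_def)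
qed

lemma root_visits_inf_cond_ii:
  fixes rt :: 'v
  shows "inf_cond_ii rt (root_visits rt)"
  unfolding inf_cond_ii_def
proof (intro allI impI)
  fix x :: "'v frog_model" and P :: "nat \<Rightarrow> 'v"
  assume "P 0 \<noteq> rt" "root_visits rt x = \<infinity>"
  moreover obtain eta S where "x = (eta, S)" by fastforce
  moreover have "root_visits rt (eta, S) \<le> root_visits rt (add_frog P (eta, S))"
    unfolding add_frog_def prod.case using \<open>P 0 \<noteq> rt\<close> by (intro root_visits_mono) auto
  ultimately show "root_visits rt (add_frog P x) = \<infinity>"
    by (simp add: top_unique)
qed

lemma root_visits_add_frog_subadditive:
  assumes "P1 0 \<noteq> rt" "P2 0 = P1 0"
  shows "root_visits rt (add_frog P1 (add_frog P2 x))
    \<le> root_visits rt (add_frog P1 x) + root_visits rt (add_frog P2 x)"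
proof -
  obtain eta S where x: "x = (eta, S)" by fastforce
  define v where "v = P1 0"
  have v_R: "\<forall>Q\<in>set R. Q 0 = v" if "set R \<subseteq> {P1, P2}" for R
    using that assms by (auto simp: v_def)
  have "v \<noteq> rt" using assms by (simp add: v_def)
  show ?thesis
  proof (cases "activated rt eta S v")
    case False
    then show ?thesis
      using root_visits_add_frogs_inactive[OF v_R \<open>v \<noteq> rt\<close> False, of "[P1, P2]"]
        root_visits_add_frogs_inactive[OF v_R \<open>v \<noteq> rt\<close> False, of "[P1]"]
      by (simp add: x add_increasing2)
  next
    case True
    define c where "c = visit_count rt"
    define \<omega> where "\<omega> = (\<lambda>(w, i). c (S w i))"
    define A where "A = frogs_at rt eta (activated rt eta S)"
    define B where "B Q = frogs_at rt eta (activated_by rt v eta S Q)" for Q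
    note active = root_visits_add_frogs_active[OF v_R \<open>v \<noteq> rt\<close> True,
        folded c_def, folded \<omega>_def A_def B_def]
    have "infsum \<omega> (A \<union> (B P1 \<union> B P2)) \<le> infsum \<omega> (A \<union> B P1) + infsum \<omega> (A \<union> B P2)"
      using infsum_ennreal_Un_le[of \<omega> "A \<union> B P1" "A \<union> B P2"] by (simp add: Un_ac)
    then have "root_visits rt (add_frog P1 (add_frog P2 x))
        \<le> c (S rt 0) + (infsum \<omega> (A \<union> B P1) + infsum \<omega> (A \<union> B P2)) + (c P1 + c P2)"
      using active[of "[P1, P2]"] by (simp add: x add_mono)
    also have "\<dots> \<le> c (S rt 0) + (infsum \<omega> (A \<union> B P1) + infsum \<omega> (A \<union> B P2)) + (c P1 + c P2)
        + c (S rt 0)"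
      by (rule add_increasing2) auto
    also have "\<dots> = root_visits rt (add_frog P1 x) + root_visits rt (add_frog P2 x)"
      using active[of "[P1]"] active[of "[P2]"] by (simp add: x ac_simps)
    finally show ?thesis .
  qed
qed

lemma root_visits_inf_cond_iii:
  fixes rt :: 'v
  shows "inf_cond_iii rt (root_visits rt)"
  unfolding inf_cond_iii_def
proof (intro allI impI)
  fix x :: "'v frog_model" and P1 P2 :: "nat \<Rightarrow> 'v"
  assume "P1 0 \<noteq> rt" "P2 0 = P1 0" "root_visits rt (add_frog P1 (add_frog P2 x)) = \<infinity>"
  then show "root_visits rt (add_frog P1 x) = \<infinity> \<or> root_visits rt (add_frog P2 x) = \<infinity>"
    using root_visits_add_frog_subadditive[of P1 rt P2 x] by (auto simp: top_unique)
qed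

lemma reached_eventually:
  assumes conv: "\<And>v. (\<lambda>k. etas k v) \<longlonglongrightarrow> (eta v :: nat)"
    and "reached rt eta S w t"
  shows "eventually (\<lambda>k. reached rt (etas k) S w t) sequentially"
  using assms(2)
proof (induction rule: reached.induct)
  case (root_frog j)
  show ?case by (rule always_eventually) (simp add: reached.root_frog)
next
  case (woken v t i j)
  have "eventually (\<lambda>k. i < etas k v) sequentially"
    using order_tendstoD(1)[OF conv woken.hyps(3)] .
  with woken.IH show ?case
    by eventually_elim (rule reached.woken[OF _ woken.hyps(2)])
qed

lemma finite_active_frogs_eventually:
  assumes conv: "\<And>v. (\<lambda>k. etas k v) \<longlonglongrightarrow> (eta v :: nat)"
    and "finite F" "F \<subseteq> active_frogs rt eta S"
  shows "\<exists>k. F \<subseteq> active_frogs rt (etas k) S"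
proof -
  have "eventually (\<lambda>k. p \<in> active_frogs rt (etas k) S) sequentially" if "p \<in> F" for p
  proof -
    from that assms(3) consider "p = (rt, 0)"
      | w i t where "p = (w, i)" "w \<noteq> rt" "reached rt eta S w t" "i < eta w"
      unfolding active_frogs_def activated_def by blast
    then show ?thesis
    proof cases
      case 1
      then show ?thesis by (simp add: active_frogs_def)
    next
      case 2
      have "eventually (\<lambda>k. i < etas k w) sequentially"
        using order_tendstoD(1)[OF conv 2(4)] .
      moreover have "eventually (\<lambda>k. reached rt (etas k) S w t) sequentially"
        by (rule reached_eventually[OF conv 2(3)])
      ultimately show ?thesis
        by eventually_elim (auto simp: active_frogs_def activated_def 2(1,2))
    qed
  qed
  then have "eventually (\<lambda>k. \<forall>p\<in>F. p \<in> active_frogs rt (etas k) S) sequentially"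
    using assms(2) by (simp add: eventually_ball_finite_distrib)
  then obtain k where "\<forall>p\<in>F. p \<in> active_frogs rt (etas k) S"
    using eventually_happens'[OF sequentially_bot] by blast
  then show ?thesis by blast
qed

lemma root_visits_le_SUP:
  assumes "\<And>v. (\<lambda>k. etas k v) \<longlonglongrightarrow> (eta v :: nat)"
  shows "root_visits rt (eta, S) \<le> (SUP k. root_visits rt (etas k, S))"
proof -
  define f where "f = (\<lambda>(v, i). visit_count rt (S v i))"
  have "root_visits rt (eta, S) = (SUP F\<in>{F. finite F \<and> F \<subseteq> active_frogs rt eta S}. sum f F)"
    unfolding root_visits_def f_def by (simp add: nonneg_infsum_complete)
  also have "\<dots> \<le> (SUP k. root_visits rt (etas k, S))"
  proof (rule SUP_least)
    fix F assume "F \<in> {F. finite F \<and> F \<subseteq> active_frogs rt eta S}"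
    then have F: "finite F" "F \<subseteq> active_frogs rt eta S"
      by auto
    from finite_active_frogs_eventually[OF assms F] obtain k
      where "F \<subseteq> active_frogs rt (etas k) S" ..
    have "sum f F = infsum f F"
      using F(1) by simp
    also have "\<dots> \<le> root_visits rt (etas k, S)"
      unfolding root_visits_def f_def prod.case by (rule infsum_ennreal_mono_set) fact
    also have "\<dots> \<le> (SUP k. root_visits rt (etas k, S))"
      by (rule SUP_upper) simp
    finally show "sum f F \<le> (SUP k. root_visits rt (etas k, S))" .
  qed
  finally show ?thesis .
qed

lemma root_visits_continuous:
  fixes rt :: 'v
  shows "continuous_statistic (root_visits rt)"
  unfolding continuous_statistic_def
proof (intro allI impI)
  fix eta S and etas :: "nat \<Rightarrow> 'v \<Rightarrow> nat"
  assume "\<forall>v. incseq (\<lambda>k. etas k v) \<and> (\<lambda>k. etas k v) \<longlonglongrightarrow> eta v"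
  then have inc: "\<And>v. incseq (\<lambda>k. etas k v)" and conv: "\<And>v. (\<lambda>k. etas k v) \<longlonglongrightarrow> eta v"
    by auto
  have incseq: "incseq (\<lambda>k. root_visits rt (etas k, S))"
    using inc by (intro incseq_SucI root_visits_mono) (auto dest: incseq_SucD)
  have "root_visits rt (etas k, S) \<le> root_visits rt (eta, S)" for k
    by (rule root_visits_mono) (simp_all add: incseq_le[OF inc conv])
  then have "(SUP k. root_visits rt (etas k, S)) = root_visits rt (eta, S)"
    by (intro antisym SUP_least root_visits_le_SUP conv)
  then show "incseq (\<lambda>k. root_visits rt (etas k, S))
      \<and> (\<lambda>k. root_visits rt (etas k, S)) \<longlonglongrightarrow> root_visits rt (eta, S)"
    using incseq LIMSEQ_SUP[OF incseq] by simp
qed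

theorem proposition4:
  fixes rt :: "'v::countable"
  shows "icv_statistic rt (root_visits rt) \<and> continuous_statistic (root_visits rt) \<and>
         pgf_statistic rt (root_visits rt)"
  using root_visits_sign_cond[of _ rt] root_visits_inf_cond_ii[of rt]
    root_visits_inf_cond_iii[of rt] root_visits_continuous[of rt]
  by (simp add: icv_statistic_def pgf_statistic_def)

end
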